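(* Let $f,g$ be smooth functions on an open interval $J\subset\mathbb{R}$, let $F$ be an antiderivative of $f$, $M=e^{2F}$, and let $V$ and $Q$ be functions on $J$ with $V'=Mg$ and $Q'=\sqrt M=e^{F}$. Suppose there are constants $A$ and $B\neq0$ and a constant $V_0$ such that $V=AQ^2+B/Q^2+V_0$ on $J$ (with $Q\neq0$ on $J$). Then, wherever the denominators below are nonzero, $$f=-\frac54\,\frac{g''+(fg)'}{g'+fg-2A}+\frac{g'''+(fg)''}{g''+(fg)'} .$$
   Context: Primes denote derivatives with respect to $x$. This is the necessary condition for the potential $V(x)=\int^xM(s)g(s)\,ds$ of the Liénard-II equation $\ddot x+f(x)\dot x^2+g(x)=0$ (with Lagrangian $L=\frac12M(x)\dot x^2-V(x)$, $M$ the Jacobi last multiplier) to be of the superintegrable form $AQ^2+B/Q^2$. *)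

theory Defs
  imports "HOL-Analysis.Analysis"
begin

definition smooth_on :: "(real \<Rightarrow> real) \<Rightarrow> real set \<Rightarrow> bool" where
  "smooth_on h J \<longleftrightarrow> (\<forall>k. \<forall>x\<in>J. ((deriv ^^ k) h) differentiable (at x))"

end

theory Submission
  imports Defs
begin

(* Write h = g' + f g, so that (e^F g)' = e^F h.  Differentiating the
   assumed potential V = A Q^2 + B/Q^2 + V0 and using V' = e^(2F) g and Q' = e^F
   gives the force law e^F g = 2 A Q - 2 B / Q^3 on J; differentiating once more
   gives h = 2 A + 6 B / Q^4.  Hence h - 2A, h' and h'' are explicit functions of
   Q, e^F and f:
       h - 2A = 6B/Q^4,   h' = -24 B e^F / Q^5,
       h'' = 120 B e^(2F) / Q^6 - 24 B e^F f / Q^5,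
   and the claimed formula for f becomes an algebraic identity in these quantities. *)

lemma higher_deriv_eq_on_open:
  fixes \<phi> \<psi> :: "real \<Rightarrow> real"
  assumes "open J" "\<And>s. s \<in> J \<Longrightarrow> \<phi> s = \<psi> s" "t \<in> J"
  shows "(deriv ^^ k) \<phi> t = (deriv ^^ k) \<psi> t"
proof (rule higher_deriv_cong_ev)
  show "\<forall>\<^sub>F s in nhds t. \<phi> s = \<psi> s"
    using eventually_nhds_in_open[OF assms(1,3)] by eventually_elim (use assms(2) in auto)
qed simp

lemma deriv12_eq_on_open:
  fixes \<phi> \<psi> \<psi>' \<psi>'' :: "real \<Rightarrow> real"
  assumes J: "open J" and eq: "\<forall>s\<in>J. \<phi> s = \<psi> s"
    and d1: "\<And>s. s \<in> J \<Longrightarrow> (\<psi> has_real_derivative \<psi>' s) (at s)"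
    and d2: "\<And>s. s \<in> J \<Longrightarrow> (\<psi>' has_real_derivative \<psi>'' s) (at s)"
    and t: "t \<in> J"
  shows "deriv \<phi> t = \<psi>' t" "deriv (deriv \<phi>) t = \<psi>'' t"
proof -
  have first: "deriv \<phi> s = \<psi>' s" if "s \<in> J" for s
    using higher_deriv_eq_on_open[OF J bspec[OF eq] that, where k=1] DERIV_imp_deriv[OF d1[OF that]]
    by simp
  then show "deriv \<phi> t = \<psi>' t" using t .
  show "deriv (deriv \<phi>) t = \<psi>'' t"
    using higher_deriv_eq_on_open[OF J first t, where k=1] DERIV_imp_deriv[OF d2[OF t]] by simp
qed

lemma smooth_on_has_higher_derivative:
  assumes "smooth_on \<phi> J" "x \<in> J"
  shows "((deriv ^^ k) \<phi> has_real_derivative (deriv ^^ Suc k) \<phi> x) (at x)"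
  using assms unfolding smooth_on_def
  by (simp add: DERIV_deriv_iff_real_differentiable)

lemma smooth_on_has_derivatives:
  assumes "smooth_on \<phi> J" "x \<in> J"
  shows "(\<phi> has_real_derivative deriv \<phi> x) (at x)"
    and "(deriv \<phi> has_real_derivative deriv (deriv \<phi>) x) (at x)"
    and "(deriv (deriv \<phi>) has_real_derivative deriv (deriv (deriv \<phi>)) x) (at x)"
  using smooth_on_has_higher_derivative[OF assms, of 0]
    smooth_on_has_higher_derivative[OF assms, of 1]
    smooth_on_has_higher_derivative[OF assms, of 2]
  by (simp_all add: eval_nat_numeral)

text \<open>The only
  subtle point is that (f g)' is differentiable, being f g' + f' g on J.\<close>
lemma deriv12_of_g'_plus_fg:
  fixes f g :: "real \<Rightarrow> real"
  assumes J: "open J" and f: "smooth_on f J" and g: "smooth_on g J" and t: "t \<in> J"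
  defines "h \<equiv> \<lambda>s. deriv g s + f s * g s"
  shows "deriv h t = deriv (deriv g) t + deriv (\<lambda>s. f s * g s) t"
    and "deriv (deriv h) t = deriv (deriv (deriv g)) t + deriv (deriv (\<lambda>s. f s * g s)) t"
proof -
  note df = smooth_on_has_derivatives[OF f] and dg = smooth_on_has_derivatives[OF g]
  have dfg: "((\<lambda>s. f s * g s) has_real_derivative f s * deriv g s + deriv f s * g s) (at s)"
    if "s \<in> J" for s
    using df(1)[OF that] dg(1)[OF that] by (auto intro!: derivative_eq_intros)
  have dfg_eq: "deriv (\<lambda>s. f s * g s) s = f s * deriv g s + deriv f s * g s" if "s \<in> J" for s
    using DERIV_imp_deriv[OF dfg[OF that]] .
  have ddfg: "(deriv (\<lambda>s. f s * g s) has_real_derivative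
      f t * deriv (deriv g) t + deriv f t * deriv g t
        + (deriv f t * deriv g t + deriv (deriv f) t * g t)) (at t)"
  proof (rule has_field_derivative_transform_within_open[OF _ J t])
    show "((\<lambda>s. f s * deriv g s + deriv f s * g s) has_real_derivative
      f t * deriv (deriv g) t + deriv f t * deriv g t
        + (deriv f t * deriv g t + deriv (deriv f) t * g t)) (at t)"
      using df(1,2)[OF t] dg(1,2)[OF t] by (auto intro!: derivative_eq_intros)
  qed (simp add: dfg_eq)
  have dh: "(h has_real_derivative deriv (deriv g) s + deriv (\<lambda>s. f s * g s) s) (at s)"
    if "s \<in> J" for s
    unfolding h_def using DERIV_add[OF dg(2)[OF that] dfg[OF that]] dfg_eq[OF that] by simp
  have dh': "((\<lambda>s. deriv (deriv g) s + deriv (\<lambda>s. f s * g s) s) has_real_derivative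
      deriv (deriv (deriv g)) t + deriv (deriv (\<lambda>s. f s * g s)) t) (at t)"
    using DERIV_add[OF dg(3)[OF t] ddfg] DERIV_imp_deriv[OF ddfg] by simp
  show "deriv h t = deriv (deriv g) t + deriv (\<lambda>s. f s * g s) t"
    using DERIV_imp_deriv[OF dh[OF t]] .
  have "deriv h s = deriv (deriv g) s + deriv (\<lambda>s. f s * g s) s" if "s \<in> J" for s
    using DERIV_imp_deriv[OF dh[OF that]] .
  then show "deriv (deriv h) t = deriv (deriv (deriv g)) t + deriv (deriv (\<lambda>s. f s * g s)) t"
    using higher_deriv_eq_on_open[OF J _ t, where \<phi>="deriv h" and k=1] DERIV_imp_deriv[OF dh']
    by simp
qed

lemma sqrt_exp_double: "sqrt (exp (2 * y)) = exp (y::real)"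
  by (simp add: exp_double)

lemma force_law:
  fixes g F V Q :: "real \<Rightarrow> real"
  assumes J: "open J" and t: "t \<in> J"
    and V: "\<And>x. x \<in> J \<Longrightarrow> (V has_real_derivative exp (2 * F x) * g x) (at x)"
    and Q: "\<And>x. x \<in> J \<Longrightarrow> (Q has_real_derivative exp (F x)) (at x)"
    and Qnz: "\<And>x. x \<in> J \<Longrightarrow> Q x \<noteq> 0"
    and VQ: "\<And>x. x \<in> J \<Longrightarrow> V x = A * (Q x)^2 + B / (Q x)^2 + V0"
  shows "exp (F t) * g t = 2 * A * Q t - 2 * B / (Q t)^3"
proof -
  have "((\<lambda>s. A * (Q s)^2 + B / (Q s)^2 + V0) has_real_derivative
          (2 * A * Q t - 2 * B / (Q t)^3) * exp (F t)) (at t)"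
    using Q[OF t] Qnz[OF t]
    by (auto intro!: derivative_eq_intros simp: field_simps power_def eval_nat_numeral)
  then have "(V has_real_derivative (2 * A * Q t - 2 * B / (Q t)^3) * exp (F t)) (at t)"
    by (rule has_field_derivative_transform_within_open[OF _ J t]) (simp add: VQ)
  then have "exp (2 * F t) * g t = (2 * A * Q t - 2 * B / (Q t)^3) * exp (F t)"
    using DERIV_unique[OF V[OF t]] by blast
  moreover have "exp (2 * F t) = exp (F t) * exp (F t)"
    by (metis exp_double power2_eq_square)
  ultimately have "exp (F t) * (exp (F t) * g t) = exp (F t) * (2 * A * Q t - 2 * B / (Q t)^3)"
    by (simp add: ac_simps)
  then show ?thesis by simp
qed

lemma g'_plus_fg_formula:
  fixes f g F Q :: "real \<Rightarrow> real"
  assumes J: "open J" and t: "t \<in> J"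
    and F: "\<And>x. x \<in> J \<Longrightarrow> (F has_real_derivative f x) (at x)"
    and g: "(g has_real_derivative deriv g t) (at t)"
    and Q: "\<And>x. x \<in> J \<Longrightarrow> (Q has_real_derivative exp (F x)) (at x)"
    and Qnz: "\<And>x. x \<in> J \<Longrightarrow> Q x \<noteq> 0"
    and force: "\<And>x. x \<in> J \<Longrightarrow> exp (F x) * g x = 2 * A * Q x - 2 * B / (Q x)^3"
  shows "deriv g t + f t * g t = 2 * A + 6 * B / (Q t)^4"
proof -
  have lhs: "((\<lambda>s. exp (F s) * g s) has_real_derivative
               exp (F t) * (deriv g t + f t * g t)) (at t)"
    using F[OF t] g by (auto intro!: derivative_eq_intros simp: algebra_simps)
  have "((\<lambda>s. 2 * A * Q s - 2 * B / (Q s)^3) has_real_derivative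
          exp (F t) * (2 * A + 6 * B / (Q t)^4)) (at t)"
    using Q[OF t] Qnz[OF t]
    by (auto intro!: derivative_eq_intros simp: field_simps power_def eval_nat_numeral)
  then have rhs: "((\<lambda>s. exp (F s) * g s) has_real_derivative
          exp (F t) * (2 * A + 6 * B / (Q t)^4)) (at t)"
    by (rule has_field_derivative_transform_within_open[OF _ J t]) (simp add: force)
  show ?thesis using DERIV_unique[OF lhs rhs] by simp
qed

lemma inverse_quartic_derivatives:
  fixes f F Q :: "real \<Rightarrow> real"
  assumes F: "(F has_real_derivative f t) (at t)"
    and Q: "(Q has_real_derivative exp (F t)) (at t)" and Qnz: "Q t \<noteq> 0"
  shows "((\<lambda>s. 2 * A + 6 * B / (Q s)^4) has_real_derivative
           -24 * B * exp (F t) / (Q t)^5) (at t)"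
    and "((\<lambda>s. -24 * B * exp (F s) / (Q s)^5) has_real_derivative
           120 * B * exp (F t)^2 / (Q t)^6 - 24 * B * exp (F t) * f t / (Q t)^5) (at t)"
  using F Q Qnz
  by (auto intro!: derivative_eq_intros simp: field_simps power_def eval_nat_numeral)

text \<open>The claimed formula for f, once h - 2A, h' and h'' are expressed through
  Q, E = e^F and f.\<close>
lemma closing_identity:
  fixes B Q E f :: real
  assumes "B \<noteq> 0" "Q \<noteq> 0" "E \<noteq> 0"
  shows "f = - (5/4) * ((-24 * B * E / Q^5) / (6 * B / Q^4))
             + (120 * B * E^2 / Q^6 - 24 * B * E * f / Q^5) / (-24 * B * E / Q^5)"
  using assms by (simp add: field_simps eval_nat_numeral)

lemma g'_plus_fg_derivatives:
  fixes f g F V Q :: "real \<Rightarrow> real"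
  assumes J: "open J" and x: "x \<in> J"
    and F: "\<And>x. x \<in> J \<Longrightarrow> (F has_real_derivative f x) (at x)"
    and g: "\<And>x. x \<in> J \<Longrightarrow> (g has_real_derivative deriv g x) (at x)"
    and V: "\<And>x. x \<in> J \<Longrightarrow> (V has_real_derivative exp (2 * F x) * g x) (at x)"
    and Q: "\<And>x. x \<in> J \<Longrightarrow> (Q has_real_derivative exp (F x)) (at x)"
    and Qnz: "\<And>x. x \<in> J \<Longrightarrow> Q x \<noteq> 0"
    and VQ: "\<And>x. x \<in> J \<Longrightarrow> V x = A * (Q x)^2 + B / (Q x)^2 + V0"
  defines "h \<equiv> \<lambda>s. deriv g s + f s * g s"
  shows "h x - 2 * A = 6 * B / (Q x)^4"
    and "deriv h x = -24 * B * exp (F x) / (Q x)^5"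
    and "deriv (deriv h) x = 120 * B * exp (F x)^2 / (Q x)^6 - 24 * B * exp (F x) * f x / (Q x)^5"
proof -
  have h: "\<forall>s\<in>J. h s = 2 * A + 6 * B / (Q s)^4"
  proof
    fix s assume s: "s \<in> J"
    show "h s = 2 * A + 6 * B / (Q s)^4"
      using g'_plus_fg_formula[OF J s F g[OF s] Q Qnz force_law[OF J _ V Q Qnz VQ]]
      by (simp add: h_def)
  qed
  then show "h x - 2 * A = 6 * B / (Q x)^4" using x by simp
  have quartic_derivs:
    "((\<lambda>s. 2 * A + 6 * B / (Q s)^4) has_real_derivative -24 * B * exp (F t) / (Q t)^5) (at t)"
    "((\<lambda>s. -24 * B * exp (F s) / (Q s)^5) has_real_derivative
        120 * B * exp (F t)^2 / (Q t)^6 - 24 * B * exp (F t) * f t / (Q t)^5) (at t)"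
    if "t \<in> J" for t
    using F[OF that] Q[OF that] Qnz[OF that] by (rule inverse_quartic_derivatives)+
  show "deriv h x = -24 * B * exp (F x) / (Q x)^5"
    "deriv (deriv h) x = 120 * B * exp (F x)^2 / (Q x)^6 - 24 * B * exp (F x) * f x / (Q x)^5"
    using deriv12_eq_on_open[OF J h quartic_derivs x] by simp_all
qed

theorem mainTheorem13:
  fixes f g F V Q :: "real \<Rightarrow> real" and J :: "real set" and A B V0 :: real
  assumes J: "open J" "is_interval J"
    and smooth: "smooth_on f J" "smooth_on g J"
    and F: "\<And>x. x \<in> J \<Longrightarrow> (F has_real_derivative f x) (at x)"
    and V: "\<And>x. x \<in> J \<Longrightarrow> (V has_real_derivative exp (2 * F x) * g x) (at x)"
    and Q: "\<And>x. x \<in> J \<Longrightarrow> (Q has_real_derivative sqrt (exp (2 * F x))) (at x)"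
    and Qnz: "\<And>x. x \<in> J \<Longrightarrow> Q x \<noteq> 0"
    and B: "B \<noteq> 0"
    and VQ: "\<And>x. x \<in> J \<Longrightarrow> V x = A * (Q x)^2 + B / (Q x)^2 + V0"
  shows "\<forall>x\<in>J.
     deriv g x + f x * g x - 2 * A \<noteq> 0 \<longrightarrow>
     deriv (deriv g) x + deriv (\<lambda>t. f t * g t) x \<noteq> 0 \<longrightarrow>
     f x = - (5/4) * ((deriv (deriv g) x + deriv (\<lambda>t. f t * g t) x)
                       / (deriv g x + f x * g x - 2 * A))
           + (deriv (deriv (deriv g)) x + deriv (deriv (\<lambda>t. f t * g t)) x)
             / (deriv (deriv g) x + deriv (\<lambda>t. f t * g t) x)"
proof (intro ballI impI)
  fix x assume x: "x \<in> J"
  have Q': "\<And>t. t \<in> J \<Longrightarrow> (Q has_real_derivative exp (F t)) (at t)"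
    using Q by (simp add: sqrt_exp_double)
  note h_values =
    g'_plus_fg_derivatives[OF J(1) x F smooth_on_has_derivatives(1)[OF smooth(2)] V Q' Qnz VQ]
  note h_split = deriv12_of_g'_plus_fg[OF J(1) smooth x]
  show "f x = - (5/4) * ((deriv (deriv g) x + deriv (\<lambda>t. f t * g t) x)
                       / (deriv g x + f x * g x - 2 * A))
           + (deriv (deriv (deriv g)) x + deriv (deriv (\<lambda>t. f t * g t)) x)
             / (deriv (deriv g) x + deriv (\<lambda>t. f t * g t) x)"
    using closing_identity[where E="exp (F x)" and f="f x", OF B Qnz[OF x] exp_not_eq_zero]
    by (simp only: h_split[symmetric] h_values)
qed

end
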